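(* Let $e_n$ and $m_n$ be the numbers of Dyck excursions with catastrophes and Dyck meanders with catastrophes of length $n$. Then \[e_n=C_e\rho_0^{-n}\big(1+O(1/n)\big),\qquad m_n=C_m\rho_0^{-n}\big(1+O(1/n)\big),\] where $\rho_0\approx0.46557$ is the unique positive root of $\rho_0^3+2\rho_0^2+\rho_0-1$, $C_e\approx0.10381$ is the positive root of $31C_e^3-62C_e^2+35C_e-3$, and $C_m\approx0.32679$ is the positive root of $31C_m^3-31C_m^2+16C_m-3$.
   Context: Dyck paths with catastrophes: paths starting at altitude $0$, never going below $0$, with steps $+1$, $-1$, and catastrophes (a step from an altitude $h\ge2$ directly to altitude $0$), all with weight $1$; meanders end anywhere, excursions end at $0$; length = number of steps. *)

theory Defs
  imports "HOL-Analysis.Analysis" "HOL-Library.Landau_Symbols"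
begin

datatype step = Up | Down | Cat

fun run :: "nat \<Rightarrow> step list \<Rightarrow> nat option" where
  "run h [] = Some h"
| "run h (Up # s) = run (Suc h) s"
| "run h (Down # s) = (if h \<ge> 1 then run (h - 1) s else None)"
| "run h (Cat # s) = (if h \<ge> 2 then run 0 s else None)"

definition meanders :: "nat \<Rightarrow> step list set" where
  "meanders n = {p. length p = n \<and> run 0 p \<noteq> None}"

definition excursions :: "nat \<Rightarrow> step list set" where
  "excursions n = {p. length p = n \<and> run 0 p = Some 0}"

definition e_num :: "nat \<Rightarrow> nat" where "e_num n = card (excursions n)"
definition m_num :: "nat \<Rightarrow> nat" where "m_num n = card (meanders n)"

end

theory Submission
  imports Defs "HOL-Complex_Analysis.Complex_Analysis"
begin

(* Let u(z) be the small root of u = z (1 + u^2). Splitting paths according to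
   their last step, the generating function of paths ending at altitude h is E(z) u(z)^h with
   E = 1 + u^2 / (1 - u - u^3); excursions are counted by E and meanders by E / (1 - u).
   With \<alpha>^3 + \<alpha> = 1 one has 1 - u - u^3 = (\<alpha> - u) (1 + \<alpha>^2 + \<alpha> u + u^2), and u = \<alpha> exactly
   at z = \<alpha>^2 = \<rho>0. So both series have a simple pole at \<rho>0 and are otherwise holomorphic
   in the disc |z| < 1/2. If U = g / (\<rho> - z) with g holomorphic beyond \<rho>, then
   \<rho>^(n+1) [z^n] U is a partial sum of the series of g at \<rho>, which converges geometrically;
   this gives [z^n] U = g(\<rho>)/\<rho> \<rho>^(-n) up to an exponentially smaller error. Evaluating at
   u = \<alpha> gives the constants, which are then identified as the real roots of the cubics. *)

section \<open>Coefficient asymptotics at a simple pole\<close>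

lemma sums_tail_le_geometric:
  fixes a :: "nat \<Rightarrow> 'a :: banach"
  assumes "a sums S" "0 \<le> q" "q < 1" "\<And>k. norm (a k) \<le> B * q ^ k"
  shows "norm (S - (\<Sum>k<n. a k)) \<le> B * q ^ n / (1 - q)"
proof (rule norm_sums_le)
  show "(\<lambda>k. a (k + n)) sums (S - (\<Sum>k<n. a k))"
    using assms(1) by (rule sums_split_initial_segment)
  show "(\<lambda>k. B * q ^ n * q ^ k) sums (B * q ^ n / (1 - q))"
    using sums_mult[OF geometric_sums, of q "B * q ^ n"] assms(2,3) by simp
  show "norm (a (k + n)) \<le> B * q ^ n * q ^ k" for k
    using assms(4)[of "k + n"] by (simp add: power_add mult_ac)
qed

lemma power_le_inverse_linear:
  fixes q :: real
  assumes "0 \<le> q" "q < 1" "n \<ge> 1"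
  shows "q ^ n \<le> 1 / ((1 - q) * n)"
proof -
  have "real n * q ^ n = (\<Sum>k<n. q ^ n)"
    by simp
  also have "\<dots> \<le> (\<Sum>k<n. q ^ k)"
    using assms by (intro sum_mono power_decreasing) auto
  also have "\<dots> \<le> 1 / (1 - q)"
    using assms by (simp add: sum_gp_strict divide_right_mono)
  finally show ?thesis
    using assms by (simp add: field_simps)
qed

lemma geometric_error_bigo:
  fixes f :: "nat \<Rightarrow> real"
  assumes "0 \<le> q" "q < 1" "0 \<le> r" "\<And>n. \<bar>f n\<bar> \<le> B * q ^ n * r ^ n"
  shows "f \<in> O(\<lambda>n. r ^ n / real n)"
proof (rule bigoI[where c = "B / (1 - q)"])
  have "B \<ge> 0"
    using assms(4)[of 0] by simp
  have "\<bar>f n\<bar> \<le> B / (1 - q) * \<bar>r ^ n / real n\<bar>" if "n \<ge> 1" for n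
  proof -
    have "\<bar>f n\<bar> \<le> B * (1 / ((1 - q) * n)) * r ^ n"
      using assms(4)[of n] power_le_inverse_linear[OF assms(1,2) that] \<open>B \<ge> 0\<close> assms(3)
      by (meson mult_left_mono mult_right_mono order.trans zero_le_power)
    then show ?thesis
      using assms(3) by (simp add: field_simps)
  qed
  then show "eventually (\<lambda>n. norm (f n) \<le> B / (1 - q) * norm (r ^ n / real n)) at_top"
    by (auto simp: eventually_at_top_linorder)
qed

lemma has_fps_expansion_partial_sums_geometric:
  fixes g :: "complex \<Rightarrow> complex"
  assumes "g has_fps_expansion G" "g holomorphic_on ball 0 R" "norm z < R"
  obtains B q where "0 \<le> q" "q < 1" "\<And>n. norm (g z - (\<Sum>k<n. fps_nth G k * z ^ k)) \<le> B * q ^ n"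
proof -
  define t where "t = (norm z + R) / 2"
  have t: "norm z < t" "t < R" "0 < t"
    unfolding t_def using assms(3) norm_ge_zero[of z] by (auto simp del: norm_ge_zero)
  have "(\<lambda>k. fps_nth G k * of_real t ^ k) sums g (of_real t)"
    using assms t by (intro has_fps_expansion_imp_sums_complex[where r = R]) auto
  then have "Bseq (\<lambda>k. fps_nth G k * of_real t ^ k)"
    by (intro convergent_imp_Bseq summable_LIMSEQ_zero[THEN convergentI]) (auto simp: sums_iff)
  then obtain C where C: "\<And>k. norm (fps_nth G k) * t ^ k \<le> C"
    using t by (auto simp: Bseq_def norm_mult norm_power)
  define q where "q = norm z / t"
  have q: "0 \<le> q" "q < 1"
    using t by (auto simp: q_def)
  have "norm (fps_nth G k * z ^ k) \<le> C * q ^ k" for k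
  proof -
    have "norm (fps_nth G k * z ^ k) = norm (fps_nth G k) * t ^ k * q ^ k"
      using t by (simp add: q_def norm_mult norm_power power_divide)
    also have "\<dots> \<le> C * q ^ k"
      using C q by (intro mult_right_mono) auto
    finally show ?thesis .
  qed
  moreover have "(\<lambda>k. fps_nth G k * z ^ k) sums g z"
    using assms by (intro has_fps_expansion_imp_sums_complex[where r = R]) auto
  ultimately have "norm (g z - (\<Sum>k<n. fps_nth G k * z ^ k)) \<le> C / (1 - q) * q ^ n" for n
    using sums_tail_le_geometric[of _ "g z" q C n] q by (simp add: field_simps)
  with q show ?thesis
    using that by blast
qed

lemma coeffs_asymptotic_simple_pole:
  fixes g :: "complex \<Rightarrow> complex" and U :: "complex fps" and u :: "nat \<Rightarrow> real"
  assumes "0 < \<rho>" "\<rho> < R" "g holomorphic_on ball 0 R"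
    and "g has_fps_expansion (fps_const (of_real \<rho>) - fps_X) * U"
    and "\<And>n. fps_nth U n = of_real (u n)"
  shows "(\<lambda>n. u n - Re (g (of_real \<rho>)) / \<rho> * (1 / \<rho>) ^ n) \<in> O(\<lambda>n. (1 / \<rho>) ^ n / real n)"
proof -
  define G where "G = (fps_const (of_real \<rho>) - fps_X) * U"
  have partial_sum: "(\<Sum>k<Suc n. fps_nth G k * of_real \<rho> ^ k) = of_real (\<rho> ^ Suc n * u n)" for n
    by (induction n) (auto simp: G_def algebra_simps fps_X_mult_nth assms(5))
  have "norm (of_real \<rho> :: complex) < R"
    using assms(1,2) by simp
  then obtain B q where q: "0 \<le> q" "q < 1"
    and B: "\<And>n. norm (g (of_real \<rho>) - (\<Sum>k<n. fps_nth G k * of_real \<rho> ^ k)) \<le> B * q ^ n"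
    using has_fps_expansion_partial_sums_geometric[OF assms(4,3)] unfolding G_def by blast
  show ?thesis
  proof (rule geometric_error_bigo[OF q, where B = "B * q / \<rho>"])
    fix n
    have "\<bar>Re (g (of_real \<rho>)) - \<rho> ^ Suc n * u n\<bar> \<le> norm (g (of_real \<rho>) - of_real (\<rho> ^ Suc n * u n))"
      using abs_Re_le_cmod[of "g (of_real \<rho>) - of_real (\<rho> ^ Suc n * u n)"] by simp
    also have "\<dots> \<le> B * q ^ Suc n"
      using B[of "Suc n"] unfolding partial_sum .
    moreover have "u n - Re (g (of_real \<rho>)) / \<rho> * (1 / \<rho>) ^ n =
        - (Re (g (of_real \<rho>)) - \<rho> ^ Suc n * u n) * (1 / \<rho>) ^ Suc n"
      using assms(1) by (simp add: field_simps power_divide)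
    ultimately show "\<bar>u n - Re (g (of_real \<rho>)) / \<rho> * (1 / \<rho>) ^ n\<bar> \<le> B * q / \<rho> * q ^ n * (1 / \<rho>) ^ n"
      using assms(1) by (simp add: abs_mult power_divide field_simps)
  qed (use assms(1) in auto)
qed

lemma has_fps_expansion_eq_on_ball:
  fixes f g :: "complex \<Rightarrow> complex"
  assumes "f has_fps_expansion F" "0 < r" "\<And>z. z \<in> ball 0 r \<Longrightarrow> g z = f z"
  shows "g has_fps_expansion F"
proof -
  have "eventually (\<lambda>z. g z = f z) (nhds 0)"
    using assms(2,3) eventually_nhds_in_open[of "ball 0 r" 0] by (auto elim!: eventually_mono)
  then show ?thesis
    using has_fps_expansion_cong assms(1) by blast
qed

section \<open>Paths by final altitude\<close>

lemma run_append: "run h (p @ q) = (case run h p of None \<Rightarrow> None | Some h' \<Rightarrow> run h' q)"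
  by (induction h p rule: run.induct) auto

lemma run_Some_le: "run h p = Some t \<Longrightarrow> t \<le> h + length p"
  by (induction h p rule: run.induct) (auto split: if_splits)

definition paths_ending_at :: "nat \<Rightarrow> nat \<Rightarrow> step list set" where
  "paths_ending_at n h = {p. length p = n \<and> run 0 p = Some h}"

definition num_paths_ending_at :: "nat \<Rightarrow> nat \<Rightarrow> nat" where
  "num_paths_ending_at n h = card (paths_ending_at n h)"

lemma finite_paths_ending_at: "finite (paths_ending_at n h)"
proof -
  have "(UNIV :: step set) = {Up, Down, Cat}"
    using step.exhaust by auto
  then have "finite (UNIV :: step set)"
    by (metis finite.emptyI finite_insert)
  then have "finite {p :: step list. set p \<subseteq> UNIV \<and> length p = n}"
    by (rule finite_lists_length_eq)
  then show ?thesis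
    by (rule rev_finite_subset) (auto simp: paths_ending_at_def)
qed

lemma paths_ending_at_Suc:
  "paths_ending_at (Suc n) h =
     (if h \<ge> 1 then (\<lambda>p. p @ [Up]) ` paths_ending_at n (h - 1) else {}) \<union>
     (\<lambda>p. p @ [Down]) ` paths_ending_at n (h + 1) \<union>
     (if h = 0 then (\<lambda>p. p @ [Cat]) ` (\<Union>j\<in>{2..n}. paths_ending_at n j) else {})"
  (is "_ = ?R")
proof (intro equalityI subsetI)
  fix q assume "q \<in> paths_ending_at (Suc n) h"
  then have len: "length q = Suc n" and r: "run 0 q = Some h"
    by (auto simp: paths_ending_at_def)
  then obtain p s where q: "q = p @ [s]" and lp: "length p = n"
    by (metis length_Suc_conv_rev)
  from r q obtain h' where h': "run 0 p = Some h'" and s: "run h' [s] = Some h"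
    by (auto simp: run_append split: option.splits)
  have "h' \<le> n" using run_Some_le[OF h'] lp by simp
  then show "q \<in> ?R"
    using s h' lp q by (cases s) (auto simp: paths_ending_at_def split: if_splits)
next
  fix q assume "q \<in> ?R"
  then show "q \<in> paths_ending_at (Suc n) h"
    by (auto simp: paths_ending_at_def run_append split: if_splits)
qed

lemma num_paths_ending_at_0: "num_paths_ending_at 0 h = (if h = 0 then 1 else 0)"
proof -
  have "paths_ending_at 0 h = (if h = 0 then {[]} else {})"
    by (auto simp: paths_ending_at_def)
  then show ?thesis by (simp add: num_paths_ending_at_def)
qed

lemma card_UN_paths_ending_at:
  "card (\<Union>j\<in>J. paths_ending_at n j) = (\<Sum>j\<in>J. num_paths_ending_at n j)" if "finite J"
  unfolding num_paths_ending_at_def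
  by (rule card_UN_disjoint) (use that finite_paths_ending_at in \<open>auto simp: paths_ending_at_def\<close>)

lemma num_paths_ending_at_Suc:
  "num_paths_ending_at (Suc n) h =
     (if h \<ge> 1 then num_paths_ending_at n (h - 1) else 0) + num_paths_ending_at n (h + 1) +
     (if h = 0 then (\<Sum>j\<in>{2..n}. num_paths_ending_at n j) else 0)"
proof -
  have disj: "(\<lambda>p. p @ [s]) ` X \<inter> (\<lambda>p. p @ [s']) ` Y = {}" if "s \<noteq> s'" for s s' :: step and X Y
    using that by auto
  have card_app: "card ((\<lambda>p. p @ [s]) ` X) = card X" for s :: step and X
    by (rule card_image) (auto simp: inj_on_def)
  show ?thesis
  proof (cases "h = 0")
    case True
    then show ?thesis
      unfolding num_paths_ending_at_def paths_ending_at_Suc[of n h]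
      by (simp add: card_Un_disjoint finite_paths_ending_at disj card_app
          card_UN_paths_ending_at[unfolded num_paths_ending_at_def])
  next
    case False
    then show ?thesis
      unfolding num_paths_ending_at_def paths_ending_at_Suc[of n h]
      by (simp add: card_Un_disjoint finite_paths_ending_at disj card_app)
  qed
qed

lemma e_num_eq: "e_num n = num_paths_ending_at n 0"
  by (simp add: e_num_def num_paths_ending_at_def paths_ending_at_def excursions_def)

lemma m_num_eq: "m_num n = (\<Sum>h\<le>n. num_paths_ending_at n h)"
proof -
  have "meanders n = (\<Union>h\<le>n. paths_ending_at n h)"
    using run_Some_le by (fastforce simp: meanders_def paths_ending_at_def)
  then show ?thesis
    by (simp add: m_num_def card_UN_paths_ending_at)
qed

section \<open>Generating functions\<close>

text \<open>The small root of \<open>u = z (1 + u\<^sup>2)\<close>, written without a division by \<open>z\<close>.\<close>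

definition kernel_root :: "complex \<Rightarrow> complex" where
  "kernel_root z = 2 * z / (1 + csqrt (1 - 4 * z^2))"

lemma one_plus_csqrt_nonzero: "1 + csqrt w \<noteq> 0"
proof
  assume "1 + csqrt w = 0"
  then have "Re (csqrt w) = -1"
    by (metis add.inverse_unique minus_complex.sel(1) one_complex.sel uminus_complex.sel(1))
  with Re_csqrt[of w] show False
    by linarith
qed

lemma kernel_root_eq: "kernel_root z = z * (1 + kernel_root z ^ 2)"
proof -
  define s where "s = csqrt (1 - 4 * z^2)"
  have nz: "1 + s \<noteq> 0" unfolding s_def by (rule one_plus_csqrt_nonzero)
  have "s^2 = 1 - 4 * z^2"
    by (simp add: s_def)
  then have k: "(1 + s)^2 + 4 * z^2 = 2 * (1 + s)"
    by (simp add: power2_eq_square algebra_simps)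
  have "z * (1 + (2 * z / (1 + s))^2) = z * ((1 + s)^2 + 4 * z^2) / (1 + s)^2"
    using nz by (simp add: field_simps)
  also have "\<dots> = z * (2 * (1 + s)) / (1 + s)^2"
    unfolding k ..
  also have "\<dots> = 2 * z / (1 + s)"
    using nz by (simp add: power2_eq_square divide_simps)
  finally show ?thesis
    unfolding kernel_root_def s_def[symmetric] ..
qed

lemma kernel_root_0 [simp]: "kernel_root 0 = 0"
  by (simp add: kernel_root_def)

lemma norm_kernel_root_le: "norm (kernel_root z) \<le> 2 * norm z"
proof -
  have "1 \<le> Re (1 + csqrt (1 - 4 * z^2))"
    using Re_csqrt[of "1 - 4 * z^2"] by simp
  also have "\<dots> \<le> norm (1 + csqrt (1 - 4 * z^2))"
    by (rule complex_Re_le_cmod)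
  finally have "2 * norm z / norm (1 + csqrt (1 - 4 * z^2)) \<le> 2 * norm z / 1"
    by (intro divide_left_mono) auto
  then show ?thesis
    by (simp add: kernel_root_def norm_divide)
qed

lemma kernel_root_holomorphic: "kernel_root holomorphic_on ball 0 (1/2)"
proof -
  have nonpos: "1 - 4 * z^2 \<notin> \<real>\<^sub>\<le>\<^sub>0" if "z \<in> ball 0 (1/2)" for z :: complex
  proof -
    have "Re (z^2) \<le> norm z ^ 2"
      using complex_Re_le_cmod[of "z^2"] by (simp add: norm_power)
    also have "\<dots> < (1/2)^2"
      using that by (intro power_strict_mono) auto
    finally have "Re (z^2) < 1/4"
      by (simp add: power_divide)
    then show ?thesis by (auto simp: complex_nonpos_Reals_iff)
  qed
  have "(\<lambda>z. csqrt (1 - 4 * z^2)) holomorphic_on ball 0 (1/2)"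
    using nonpos by (intro holomorphic_on_csqrt' holomorphic_intros) auto
  then show ?thesis
    unfolding kernel_root_def[abs_def]
    by (intro holomorphic_on_divide holomorphic_on_add holomorphic_on_mult holomorphic_on_const
        holomorphic_on_ident one_plus_csqrt_nonzero)
qed

lemma norm_kernel_root_less: "norm z < r / 2 \<Longrightarrow> norm (kernel_root z) < r"
  using norm_kernel_root_le[of z] by simp

definition excursion_gf :: "complex \<Rightarrow> complex" where
  "excursion_gf z = 1 + kernel_root z ^ 2 / (1 - kernel_root z - kernel_root z ^ 3)"

definition height_gf :: "nat \<Rightarrow> complex \<Rightarrow> complex" where
  "height_gf h z = excursion_gf z * kernel_root z ^ h"

definition height_tail_gf :: "nat \<Rightarrow> complex \<Rightarrow> complex" where
  "height_tail_gf a z = excursion_gf z * kernel_root z ^ a / (1 - kernel_root z)"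

lemma one_minus_cube_poly_nonzero:
  fixes w :: complex
  assumes "norm w < 1/2"
  shows "1 - w - w^3 \<noteq> 0"
proof
  assume "1 - w - w^3 = 0"
  then have "1 = norm (w + w^3)"
    by (simp add: algebra_simps)
  also have "\<dots> \<le> norm w + norm w ^ 3"
    by (metis norm_triangle_ineq norm_power)
  also have "norm w ^ 3 \<le> (1/2)^3"
    using assms by (intro power_mono) auto
  finally show False
    using assms by (simp add: power3_eq_cube)
qed

lemma excursion_gf_eq:
  assumes "z \<in> ball 0 (1/4)"
  defines "y \<equiv> kernel_root z"
  shows "excursion_gf z = (1 - y) * (1 + y^2) / (1 - y - y^3)"
proof -
  have "1 - y - y^3 \<noteq> 0"
    unfolding y_def using assms(1) by (intro one_minus_cube_poly_nonzero norm_kernel_root_less) auto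
  then show ?thesis
    by (simp add: excursion_gf_def y_def[symmetric] field_simps power2_eq_square power3_eq_cube)
qed

lemma excursion_gf_holomorphic: "excursion_gf holomorphic_on ball 0 (1/4)"
proof -
  have "kernel_root holomorphic_on ball 0 (1/4)"
    by (rule holomorphic_on_subset[OF kernel_root_holomorphic]) auto
  moreover have "1 - kernel_root z - kernel_root z ^ 3 \<noteq> 0" if "z \<in> ball 0 (1/4)" for z
    using that by (intro one_minus_cube_poly_nonzero norm_kernel_root_less) auto
  ultimately show ?thesis
    unfolding excursion_gf_def[abs_def] by (intro holomorphic_intros) auto
qed

lemma height_gf_holomorphic: "height_gf h holomorphic_on ball 0 (1/4)"
  unfolding height_gf_def[abs_def]
  by (intro holomorphic_intros excursion_gf_holomorphic
      holomorphic_on_subset[OF kernel_root_holomorphic]) auto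

lemma height_tail_gf_holomorphic: "height_tail_gf a holomorphic_on ball 0 (1/4)"
proof -
  have "kernel_root z \<noteq> 1" if "z \<in> ball 0 (1/4)" for z
    using norm_kernel_root_less[of z 1] that by auto
  then show ?thesis
    unfolding height_tail_gf_def[abs_def]
    by (intro holomorphic_intros excursion_gf_holomorphic
        holomorphic_on_subset[OF kernel_root_holomorphic]) auto
qed

definition height_fps :: "nat \<Rightarrow> complex fps" where
  "height_fps h = fps_expansion (height_gf h) 0"

definition height_tail_fps :: "nat \<Rightarrow> complex fps" where
  "height_tail_fps a = fps_expansion (height_tail_gf a) 0"

definition kernel_root_fps :: "complex fps" where
  "kernel_root_fps = fps_expansion kernel_root 0"

lemma has_fps_expansion_height_gf: "height_gf h has_fps_expansion height_fps h"
  unfolding height_fps_def using height_gf_holomorphic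
  by (intro has_fps_expansion_fps_expansion[of "ball 0 (1/4)"]) auto

lemma has_fps_expansion_height_tail_gf: "height_tail_gf a has_fps_expansion height_tail_fps a"
  unfolding height_tail_fps_def using height_tail_gf_holomorphic
  by (intro has_fps_expansion_fps_expansion[of "ball 0 (1/4)"]) auto

lemma has_fps_expansion_kernel_root: "kernel_root has_fps_expansion kernel_root_fps"
  unfolding kernel_root_fps_def using kernel_root_holomorphic
  by (intro has_fps_expansion_fps_expansion[of "ball 0 (1/2)"]) auto

lemma height_fps_Suc:
  "height_fps (Suc h) = fps_X * (height_fps h + height_fps (Suc (Suc h)))"
  unfolding height_fps_def[of "Suc h"]
proof (rule fps_expansion_eqI, rule has_fps_expansion_eq_on_ball[where r = 1])
  show "(\<lambda>z. z * (height_gf h z + height_gf (Suc (Suc h)) z)) has_fps_expansion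
          fps_X * (height_fps h + height_fps (Suc (Suc h)))"
    by (intro has_fps_expansion_mult has_fps_expansion_add has_fps_expansion_height_gf
        has_fps_expansion_fps_X)
  fix z :: complex
  define y where "y = kernel_root z"
  have "height_gf (Suc h) z - z * (height_gf h z + height_gf (Suc (Suc h)) z) =
      height_gf h z * (y - z * (1 + y^2))"
    by (simp add: height_gf_def y_def algebra_simps power2_eq_square)
  then show "height_gf (Suc h) z = z * (height_gf h z + height_gf (Suc (Suc h)) z)"
    using kernel_root_eq[of z] by (simp add: y_def)
qed simp

lemma height_fps_0: "height_fps 0 = 1 + fps_X * (height_fps 1 + height_tail_fps 2)"
  unfolding height_fps_def[of 0]
proof (rule fps_expansion_eqI, rule has_fps_expansion_eq_on_ball[where r = "1/4"])
  show "(\<lambda>z. 1 + z * (height_gf 1 z + height_tail_gf 2 z)) has_fps_expansion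
          1 + fps_X * (height_fps 1 + height_tail_fps 2)"
    by (intro has_fps_expansion_mult has_fps_expansion_add has_fps_expansion_height_gf
        has_fps_expansion_height_tail_gf has_fps_expansion_fps_X has_fps_expansion_1)
  fix z :: complex
  assume z: "z \<in> ball 0 (1/4)"
  then have "norm (kernel_root z) < 1/2"
    by (intro norm_kernel_root_less) auto
  define y where "y = kernel_root z"
  define E where "E = excursion_gf z"
  have y1: "1 - y \<noteq> 0" and y3: "1 - y - y^3 \<noteq> 0"
    using \<open>norm (kernel_root z) < 1/2\<close> one_minus_cube_poly_nonzero by (auto simp: y_def)
  have "E * y + E * y^2 / (1 - y) = E * y / (1 - y)"
    using y1 by (simp add: field_simps power2_eq_square)
  also have "\<dots> = (1 + y^2) * y / (1 - y - y^3)"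
    using y1 y3 unfolding E_def excursion_gf_eq[OF z] y_def[symmetric] by (simp add: divide_simps)
  finally have "z * (E * y + E * y^2 / (1 - y)) = z * (1 + y^2) * y / (1 - y - y^3)"
    by simp
  also have "\<dots> = y^2 / (1 - y - y^3)"
    using kernel_root_eq[of z] by (simp add: y_def[symmetric] power2_eq_square)
  finally show "height_gf 0 z = 1 + z * (height_gf 1 z + height_tail_gf 2 z)"
    by (simp add: height_gf_def height_tail_gf_def excursion_gf_def y_def E_def)
qed simp

lemma fps_nth_kernel_root_fps_power: "fps_nth (kernel_root_fps ^ Suc n * G) n = 0"
proof -
  have "fps_nth kernel_root_fps 0 = 0"
    using fps_nth_fps_expansion[OF has_fps_expansion_kernel_root, of 0] by simp
  then have "kernel_root_fps = fps_X * fps_shift 1 kernel_root_fps"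
    by (auto simp: fps_eq_iff fps_X_mult_nth)
  then have "kernel_root_fps ^ Suc n * G =
      fps_X ^ Suc n * (fps_shift 1 kernel_root_fps ^ Suc n * G)"
    by (metis power_mult_distrib mult.assoc)
  then show ?thesis
    by (simp only: fps_X_power_mult_nth) simp
qed

lemma fps_nth_height_tail_fps:
  assumes "a \<le> Suc n"
  shows "fps_nth (height_tail_fps a) n = (\<Sum>j=a..n. fps_nth (height_fps j) n)"
proof -
  have "height_tail_fps a = (\<Sum>j=a..n. height_fps j) + kernel_root_fps ^ Suc n * height_tail_fps 0"
    unfolding height_tail_fps_def[of a]
  proof (rule fps_expansion_eqI, rule has_fps_expansion_eq_on_ball[where r = "1/4"])
    show "(\<lambda>z. (\<Sum>j=a..n. height_gf j z) + kernel_root z ^ Suc n * height_tail_gf 0 z)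
        has_fps_expansion (\<Sum>j=a..n. height_fps j) + kernel_root_fps ^ Suc n * height_tail_fps 0"
      by (intro has_fps_expansion_mult has_fps_expansion_add has_fps_expansion_sum
          has_fps_expansion_power has_fps_expansion_height_gf has_fps_expansion_height_tail_gf
          has_fps_expansion_kernel_root)
    fix z :: complex
    assume "z \<in> ball 0 (1/4)"
    then have "norm (kernel_root z) < 1"
      by (intro norm_kernel_root_less) auto
    define y where "y = kernel_root z"
    have y1: "1 - y \<noteq> 0"
      using \<open>norm (kernel_root z) < 1\<close> by (auto simp: y_def)
    have gp: "(\<Sum>j=a..n. y ^ j) = (y ^ a - y ^ Suc n) / (1 - y)"
    proof (cases "a \<le> n")
      case True
      then show ?thesis
        using sum_gp_multiplied[OF True, of y] y1 by (simp add: field_simps)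
    next
      case False
      then show ?thesis
        using assms by (simp add: le_Suc_eq)
    qed
    have "height_tail_gf a z =
        excursion_gf z * ((y ^ a - y ^ Suc n) / (1 - y)) + y ^ Suc n * (excursion_gf z / (1 - y))"
      by (simp add: height_tail_gf_def y_def[symmetric] algebra_simps diff_divide_distrib)
    also have "\<dots> = (\<Sum>j=a..n. height_gf j z) + kernel_root z ^ Suc n * height_tail_gf 0 z"
      unfolding height_gf_def height_tail_gf_def y_def[symmetric] sum_distrib_left[symmetric] gp
      by simp
    finally show "height_tail_gf a z =
        (\<Sum>j=a..n. height_gf j z) + kernel_root z ^ Suc n * height_tail_gf 0 z" .
  qed simp
  then show ?thesis
    by (simp only: fps_add_nth fps_nth_kernel_root_fps_power) (simp add: fps_sum_nth)
qed

lemma fps_nth_height_fps: "fps_nth (height_fps h) n = of_nat (num_paths_ending_at n h)"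
proof (induction n arbitrary: h)
  case 0
  have "fps_nth (height_fps h) 0 = height_gf h 0"
    using fps_nth_fps_expansion[OF has_fps_expansion_height_gf, of h 0] by simp
  then show ?case
    by (simp add: height_gf_def excursion_gf_def num_paths_ending_at_0)
next
  case (Suc n)
  note IH = Suc.IH
  show ?case
  proof (cases h)
    case 0
    have "fps_nth (height_tail_fps 2) n = (\<Sum>j=2..n. of_nat (num_paths_ending_at n j))"
    proof (cases "n = 0")
      case True
      have "fps_nth (height_tail_fps 2) 0 = height_tail_gf 2 0"
        using fps_nth_fps_expansion[OF has_fps_expansion_height_tail_gf, of 2 0] by simp
      then show ?thesis
        using True by (simp add: height_tail_gf_def)
    next
      case False
      then show ?thesis
        using IH by (simp add: fps_nth_height_tail_fps)
    qed
    then show ?thesis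
      using 0 IH by (simp add: height_fps_0 num_paths_ending_at_Suc)
  next
    case (Suc h')
    have "fps_nth (height_fps (Suc h')) (Suc n) =
        fps_nth (height_fps h') n + fps_nth (height_fps (Suc (Suc h'))) n"
      by (subst height_fps_Suc) simp
    then show ?thesis
      using Suc IH by (simp add: num_paths_ending_at_Suc)
  qed
qed

lemma fps_nth_height_fps_0: "fps_nth (height_fps 0) n = of_nat (e_num n)"
  by (simp add: fps_nth_height_fps e_num_eq)

lemma fps_nth_height_tail_fps_0: "fps_nth (height_tail_fps 0) n = of_nat (m_num n)"
  by (simp add: fps_nth_height_tail_fps fps_nth_height_fps m_num_eq atLeast0AtMost)

section \<open>The dominant singularity\<close>

lemma cubic_root_bounds:
  fixes \<alpha> :: real
  assumes "\<alpha> ^ 3 + \<alpha> = 1"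
  shows "1/2 \<le> \<alpha>" "\<alpha> ^ 2 < 1/2"
proof -
  have cube: "\<alpha> * \<alpha> ^ 2 = 1 - \<alpha>"
    using assms by (simp add: power3_eq_cube power2_eq_square)
  have "\<alpha> > 0"
  proof (rule ccontr)
    assume "\<not> \<alpha> > 0"
    then have "\<alpha> * \<alpha> ^ 2 \<le> 0"
      by (simp add: mult_nonpos_nonneg)
    with cube \<open>\<not> \<alpha> > 0\<close> show False
      by linarith
  qed
  show "1/2 \<le> \<alpha>"
  proof (rule ccontr)
    assume "\<not> 1/2 \<le> \<alpha>"
    then have "\<alpha> ^ 3 < (1/2) ^ 3"
      using \<open>\<alpha> > 0\<close> by (intro power_strict_mono) auto
    with assms \<open>\<not> 1/2 \<le> \<alpha>\<close> show False
      by (simp add: power_divide)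
  qed
  show "\<alpha> ^ 2 < 1/2"
  proof (rule ccontr)
    assume "\<not> \<alpha> ^ 2 < 1/2"
    then have "\<alpha> * (1/2) \<le> \<alpha> * \<alpha> ^ 2"
      using \<open>\<alpha> > 0\<close> by (intro mult_left_mono) auto
    then have "\<alpha> ^ 2 \<le> (2/3) ^ 2"
      using cube \<open>\<alpha> > 0\<close> by (intro power_mono) auto
    with \<open>\<not> \<alpha> ^ 2 < 1/2\<close> show False
      by (simp add: power_divide)
  qed
qed

lemma complex_cubic_root: "\<alpha> ^ 3 + \<alpha> = 1 \<Longrightarrow> (of_real \<alpha> :: complex) ^ 3 + of_real \<alpha> = 1"
  by (metis of_real_1 of_real_add of_real_power)

text \<open>The roots of this quadratic are non-real conjugates of modulus \<open>sqrt (1 + \<alpha>\<^sup>2)\<close>.\<close>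

lemma pole_quadratic_nonzero:
  fixes w :: complex and \<alpha> :: real
  assumes "norm w < 1"
  shows "1 + of_real \<alpha> ^ 2 + of_real \<alpha> * w + w ^ 2 \<noteq> 0"
proof
  assume root: "1 + of_real \<alpha> ^ 2 + of_real \<alpha> * w + w ^ 2 = 0"
  define x y where "x = Re w" and "y = Im w"
  have re: "x * x - y * y + \<alpha> * x + 1 + \<alpha>^2 = 0"
    using arg_cong[OF root, of Re] by (simp add: power2_eq_square x_def y_def)
  have im: "y * (2 * x + \<alpha>) = 0"
    using arg_cong[OF root, of Im] by (simp add: power2_eq_square x_def y_def algebra_simps)
  have "norm w ^ 2 < 1"
    using assms by (simp add: power_less_one_iff)
  then have "x * x + y * y < 1"
    using cmod_power2[of w] by (simp add: x_def y_def power2_eq_square)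
  show False
  proof (cases "y = 0")
    case True
    have "(x + \<alpha> / 2)^2 + 3 / 4 * \<alpha>^2 + 1 = 0"
      using re True by (simp add: power2_eq_square algebra_simps)
    moreover have "(x + \<alpha> / 2)^2 + 3 / 4 * \<alpha>^2 \<ge> 0"
      by simp
    ultimately show False
      by linarith
  next
    case False
    then have "x = - \<alpha> / 2"
      using im by simp
    then have "x * x + y * y = 1 + \<alpha>^2"
      using re by (simp add: power2_eq_square algebra_simps)
    then show False
      using \<open>x * x + y * y < 1\<close> by (simp add: add_less_same_cancel1)
  qed
qed

text \<open>If \<open>\<alpha>\<^sup>3 + \<alpha> = 1\<close> then \<open>1 - w - w\<^sup>3 = (\<alpha> - w) (1 + \<alpha>\<^sup>2 + \<alpha> w + w\<^sup>2)\<close>,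
  so \<open>w = \<alpha>\<close> is the only zero of the cubic in the unit disc.\<close>

definition pole_cofactor :: "real \<Rightarrow> complex \<Rightarrow> complex" where
  "pole_cofactor \<alpha> w =
     (1 - of_real \<alpha> * w) / ((1 + of_real \<alpha> ^ 2) * (1 + of_real \<alpha> ^ 2 + of_real \<alpha> * w + w ^ 2))"

lemma cube_poly_times_pole_cofactor:
  assumes "\<alpha> ^ 3 + \<alpha> = 1" "norm w < 1"
  shows "(1 - w - w^3) * pole_cofactor \<alpha> w = of_real \<alpha> * (of_real \<alpha> - w) * (1 - of_real \<alpha> * w)"
proof -
  define a :: complex where "a = of_real \<alpha>"
  have a3: "a ^ 3 + a = 1"
    unfolding a_def using assms(1) by (rule complex_cubic_root)
  define D where "D = 1 + a^2 + a * w + w^2"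
  have D: "D \<noteq> 0"
    unfolding D_def a_def using pole_quadratic_nonzero[OF assms(2)] .
  have a_inv: "a * (1 + a^2) = 1"
    using a3 by (simp add: algebra_simps power3_eq_cube power2_eq_square)
  then have a2: "1 + a^2 \<noteq> 0"
    by auto
  have factor: "1 - w - w^3 = (a - w) * D"
    using a3 unfolding D_def by - algebra
  have "(1 - w - w^3) * pole_cofactor \<alpha> w = (a - w) * D * ((1 - a * w) / ((1 + a^2) * D))"
    unfolding factor pole_cofactor_def a_def D_def ..
  also have "\<dots> = (a - w) * (1 - a * w) * (1 / (1 + a^2))"
    using D a2 by (simp add: divide_simps)
  also have "1 / (1 + a^2) = a"
    using a_inv a2 by (simp add: field_simps)
  finally show ?thesis
    by (simp add: a_def mult_ac)
qed

lemma one_plus_sq_nonzero: "norm w < 1 \<Longrightarrow> 1 + w^2 \<noteq> (0::complex)"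
proof
  assume "norm w < 1" "1 + w^2 = 0"
  then have "norm (w^2) = 1"
    by (simp add: add_eq_0_iff)
  moreover have "norm (w^2) < 1"
    using \<open>norm w < 1\<close> by (simp add: norm_power power_less_one_iff)
  ultimately show False
    by simp
qed

lemma pole_over_cube_poly:
  assumes "\<alpha> ^ 3 + \<alpha> = 1" "z \<in> ball 0 (1/4)"
  defines "y \<equiv> kernel_root z"
  shows "(of_real \<alpha> ^ 2 - z) / (1 - y - y^3) = pole_cofactor \<alpha> y / (1 + y^2)"
proof -
  define a :: complex where "a = of_real \<alpha>"
  have ny: "norm y < 1/2"
    unfolding y_def using assms(2) by (intro norm_kernel_root_less) auto
  have cube: "1 - y - y^3 \<noteq> 0"
    using ny by (rule one_minus_cube_poly_nonzero)
  have sq: "1 + y^2 \<noteq> 0"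
    using ny by (intro one_plus_sq_nonzero) auto
  have "(a^2 - z) * (1 + y^2) = a^2 * (1 + y^2) - y"
    using kernel_root_eq[of z] by (simp add: y_def[symmetric] algebra_simps)
  also have "\<dots> = a * (a - y) * (1 - a * y)"
    using complex_cubic_root[OF assms(1)] unfolding a_def[symmetric] by - algebra
  also have "\<dots> = (1 - y - y^3) * pole_cofactor \<alpha> y"
    using cube_poly_times_pole_cofactor[OF assms(1)] ny by (simp add: a_def)
  finally show ?thesis
    using cube sq unfolding a_def by (simp add: field_simps)
qed

text \<open>The excursion and meander series multiplied by \<open>\<alpha>\<^sup>2 - z\<close> (see \<open>pole_times_excursion_gf\<close> and
  \<open>pole_times_meander_gf\<close>), in a form that is visibly holomorphic for \<open>|z| < 1/2\<close>.\<close>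

definition excursion_numerator :: "real \<Rightarrow> complex \<Rightarrow> complex" where
  "excursion_numerator \<alpha> z =
     of_real \<alpha> ^ 2 - z +
     kernel_root z ^ 2 * pole_cofactor \<alpha> (kernel_root z) / (1 + kernel_root z ^ 2)"

definition meander_numerator :: "real \<Rightarrow> complex \<Rightarrow> complex" where
  "meander_numerator \<alpha> z = pole_cofactor \<alpha> (kernel_root z)"

lemma pole_times_excursion_gf:
  assumes "\<alpha> ^ 3 + \<alpha> = 1" "z \<in> ball 0 (1/4)"
  shows "(of_real \<alpha> ^ 2 - z) * excursion_gf z = excursion_numerator \<alpha> z"
proof -
  define y where "y = kernel_root z"
  have "(of_real \<alpha> ^ 2 - z) * excursion_gf z =
      of_real \<alpha> ^ 2 - z + y^2 * ((of_real \<alpha> ^ 2 - z) / (1 - y - y^3))"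
    by (simp add: excursion_gf_def y_def algebra_simps)
  then show ?thesis
    unfolding y_def pole_over_cube_poly[OF assms] excursion_numerator_def by simp
qed

lemma pole_times_meander_gf:
  assumes "\<alpha> ^ 3 + \<alpha> = 1" "z \<in> ball 0 (1/4)"
  shows "(of_real \<alpha> ^ 2 - z) * height_tail_gf 0 z = meander_numerator \<alpha> z"
proof -
  define y where "y = kernel_root z"
  have ny: "norm y < 1"
    using norm_kernel_root_less[of z 1] assms(2) by (auto simp: y_def)
  then have "1 - y \<noteq> 0"
    by auto
  then have "(of_real \<alpha> ^ 2 - z) * height_tail_gf 0 z =
      (of_real \<alpha> ^ 2 - z) / (1 - y - y^3) * (1 + y^2)"
    using excursion_gf_eq[OF assms(2)] by (simp add: height_tail_gf_def y_def[symmetric])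
  also have "\<dots> = pole_cofactor \<alpha> y"
    using pole_over_cube_poly[OF assms] one_plus_sq_nonzero[OF ny] by (simp add: y_def)
  finally show ?thesis
    by (simp add: meander_numerator_def y_def)
qed

lemma one_plus_of_real_sq_nonzero: "1 + of_real \<alpha> ^ 2 \<noteq> (0::complex)"
proof -
  have "1 + of_real \<alpha> ^ 2 = (of_real (1 + \<alpha> ^ 2) :: complex)"
    by simp
  moreover have "1 + \<alpha> ^ 2 \<noteq> 0"
    by (metis add_pos_nonneg zero_le_power2 zero_less_one less_irrefl)
  ultimately show ?thesis
    by (metis of_real_eq_0_iff)
qed

lemma meander_numerator_holomorphic: "meander_numerator \<alpha> holomorphic_on ball 0 (1/2)"
proof -
  have "1 + of_real \<alpha> ^ 2 + of_real \<alpha> * kernel_root z + kernel_root z ^ 2 \<noteq> 0"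
    if "z \<in> ball 0 (1/2)" for z
    using that by (intro pole_quadratic_nonzero norm_kernel_root_less) auto
  then show ?thesis
    unfolding meander_numerator_def[abs_def] pole_cofactor_def
    by (intro holomorphic_intros kernel_root_holomorphic) (auto simp: one_plus_of_real_sq_nonzero)
qed

lemma excursion_numerator_holomorphic: "excursion_numerator \<alpha> holomorphic_on ball 0 (1/2)"
proof -
  have "1 + kernel_root z ^ 2 \<noteq> 0" if "z \<in> ball 0 (1/2)" for z
    using that by (intro one_plus_sq_nonzero norm_kernel_root_less) auto
  then show ?thesis
    using meander_numerator_holomorphic
    unfolding excursion_numerator_def[abs_def] meander_numerator_def[symmetric]
    by (intro holomorphic_intros kernel_root_holomorphic) auto
qed

lemma has_fps_expansion_excursion_numerator:
  assumes "\<alpha> ^ 3 + \<alpha> = 1"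
  shows "excursion_numerator \<alpha> has_fps_expansion (fps_const (of_real \<alpha> ^ 2) - fps_X) * height_fps 0"
proof (rule has_fps_expansion_eq_on_ball[where r = "1/4"])
  show "(\<lambda>z. (of_real \<alpha> ^ 2 - z) * height_gf 0 z) has_fps_expansion
      (fps_const (of_real \<alpha> ^ 2) - fps_X) * height_fps 0"
    by (intro has_fps_expansion_mult has_fps_expansion_diff has_fps_expansion_const
        has_fps_expansion_fps_X has_fps_expansion_height_gf)
qed (use pole_times_excursion_gf[OF assms] in \<open>auto simp: height_gf_def\<close>)

lemma has_fps_expansion_meander_numerator:
  assumes "\<alpha> ^ 3 + \<alpha> = 1"
  shows "meander_numerator \<alpha> has_fps_expansion
    (fps_const (of_real \<alpha> ^ 2) - fps_X) * height_tail_fps 0"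
proof (rule has_fps_expansion_eq_on_ball[where r = "1/4"])
  show "(\<lambda>z. (of_real \<alpha> ^ 2 - z) * height_tail_gf 0 z) has_fps_expansion
      (fps_const (of_real \<alpha> ^ 2) - fps_X) * height_tail_fps 0"
    by (intro has_fps_expansion_mult has_fps_expansion_diff has_fps_expansion_const
        has_fps_expansion_fps_X has_fps_expansion_height_tail_gf)
qed (use pole_times_meander_gf[OF assms] in auto)

lemma kernel_root_of_real_root:
  assumes "\<alpha> ^ 3 + \<alpha> = 1"
  shows "kernel_root (of_real (\<alpha> ^ 2)) = of_real \<alpha>"
proof -
  have "1 - 4 * (\<alpha> ^ 2) ^ 2 = (2 * \<alpha> - 1) ^ 2"
    using assms by - algebra
  then have "(of_real (1 - 4 * (\<alpha> ^ 2) ^ 2) :: complex) = of_real ((2 * \<alpha> - 1) ^ 2)"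
    by (rule arg_cong)
  then have "1 - 4 * (of_real (\<alpha> ^ 2))^2 = (of_real ((2 * \<alpha> - 1) ^ 2) :: complex)"
    by (simp only: of_real_diff of_real_mult of_real_1 of_real_numeral of_real_power)
  moreover have "csqrt (of_real ((2 * \<alpha> - 1) ^ 2)) = of_real (2 * \<alpha> - 1)"
    using cubic_root_bounds(1)[OF assms] by (subst csqrt_of_real) auto
  ultimately have "kernel_root (of_real (\<alpha> ^ 2)) = of_real (2 * \<alpha> ^ 2 / (1 + (2 * \<alpha> - 1)))"
    by (simp add: kernel_root_def)
  also have "2 * \<alpha> ^ 2 / (1 + (2 * \<alpha> - 1)) = \<alpha>"
    using cubic_root_bounds(1)[OF assms] by (simp add: power2_eq_square)
  finally show ?thesis .
qed

section \<open>Asymptotics of excursions and meanders\<close>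

definition excursion_constant :: "real \<Rightarrow> real" where
  "excursion_constant \<alpha> = (1 - \<alpha> ^ 2) / ((1 + \<alpha> ^ 2) ^ 2 * (1 + 3 * \<alpha> ^ 2))"

definition meander_constant :: "real \<Rightarrow> real" where
  "meander_constant \<alpha> = (1 - \<alpha> ^ 2) / (\<alpha> ^ 2 * (1 + \<alpha> ^ 2) * (1 + 3 * \<alpha> ^ 2))"

lemma pole_cofactor_of_real:
  "pole_cofactor \<alpha> (of_real \<alpha>) = of_real ((1 - \<alpha> ^ 2) / ((1 + \<alpha> ^ 2) * (1 + 3 * \<alpha> ^ 2)))"
  by (simp add: pole_cofactor_def power2_eq_square algebra_simps)

lemma excursions_asymptotic:
  assumes "\<alpha> ^ 3 + \<alpha> = 1"
  shows "(\<lambda>n. real (e_num n) - excursion_constant \<alpha> * (1 / \<alpha> ^ 2) ^ n) \<in>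
    O(\<lambda>n. (1 / \<alpha> ^ 2) ^ n / real n)"
proof -
  have "\<alpha> ^ 2 < 1/2" "\<alpha> \<noteq> 0"
    using cubic_root_bounds[OF assms] by auto
  have "(\<lambda>n. real (e_num n) -
        Re (excursion_numerator \<alpha> (of_real (\<alpha> ^ 2))) / \<alpha> ^ 2 * (1 / \<alpha> ^ 2) ^ n)
      \<in> O(\<lambda>n. (1 / \<alpha> ^ 2) ^ n / real n)"
    using has_fps_expansion_excursion_numerator[OF assms] \<open>\<alpha> ^ 2 < 1/2\<close> \<open>\<alpha> \<noteq> 0\<close>
    by (intro coeffs_asymptotic_simple_pole[where R = "1/2" and U = "height_fps 0"]
        excursion_numerator_holomorphic) (auto simp: fps_nth_height_fps_0)
  moreover have "excursion_numerator \<alpha> (of_real (\<alpha> ^ 2)) =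
      of_real (\<alpha> ^ 2 * ((1 - \<alpha> ^ 2) / ((1 + \<alpha> ^ 2) * (1 + 3 * \<alpha> ^ 2))) / (1 + \<alpha> ^ 2))"
    unfolding excursion_numerator_def kernel_root_of_real_root[OF assms] pole_cofactor_of_real
    by simp
  ultimately show ?thesis
    using \<open>\<alpha> \<noteq> 0\<close> by (simp add: excursion_constant_def power2_eq_square mult_ac)
qed

lemma meanders_asymptotic:
  assumes "\<alpha> ^ 3 + \<alpha> = 1"
  shows "(\<lambda>n. real (m_num n) - meander_constant \<alpha> * (1 / \<alpha> ^ 2) ^ n) \<in>
    O(\<lambda>n. (1 / \<alpha> ^ 2) ^ n / real n)"
proof -
  have "\<alpha> ^ 2 < 1/2" "\<alpha> \<noteq> 0"
    using cubic_root_bounds[OF assms] by auto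
  have "(\<lambda>n. real (m_num n) -
        Re (meander_numerator \<alpha> (of_real (\<alpha> ^ 2))) / \<alpha> ^ 2 * (1 / \<alpha> ^ 2) ^ n)
      \<in> O(\<lambda>n. (1 / \<alpha> ^ 2) ^ n / real n)"
    using has_fps_expansion_meander_numerator[OF assms] \<open>\<alpha> ^ 2 < 1/2\<close> \<open>\<alpha> \<noteq> 0\<close>
    by (intro coeffs_asymptotic_simple_pole[where R = "1/2" and U = "height_tail_fps 0"]
        meander_numerator_holomorphic) (auto simp: fps_nth_height_tail_fps_0)
  moreover have "meander_numerator \<alpha> (of_real (\<alpha> ^ 2)) =
      of_real ((1 - \<alpha> ^ 2) / ((1 + \<alpha> ^ 2) * (1 + 3 * \<alpha> ^ 2)))"
    unfolding meander_numerator_def kernel_root_of_real_root[OF assms] pole_cofactor_of_real ..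
  ultimately show ?thesis
    by (simp add: meander_constant_def mult_ac)
qed

lemma excursion_constant_cubic:
  assumes "\<alpha> ^ 3 + \<alpha> = 1"
  defines "c \<equiv> excursion_constant \<alpha>"
  shows "31 * c ^ 3 - 62 * c ^ 2 + 35 * c - 3 = 0" and "0 \<le> c" and "c \<le> 12/100"
proof -
  have inv: "\<alpha> * (1 + \<alpha> ^ 2) = 1"
    using assms(1) by (simp add: algebra_simps power3_eq_cube power2_eq_square)
  then have sq: "1 / (1 + \<alpha> ^ 2) ^ 2 = \<alpha> ^ 2"
    by (metis power_mult_distrib power_one power_one_over mult.commute nonzero_eq_divide_eq
        mult_zero_right zero_neq_one)
  have "1 + 3 * \<alpha> ^ 2 > 0"
    by (simp add: add_pos_nonneg)
  then have "c * (1 + 3 * \<alpha> ^ 2) = (1 - \<alpha> ^ 2) * (1 / (1 + \<alpha> ^ 2) ^ 2)"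
    unfolding c_def excursion_constant_def by simp
  also have "\<dots> = \<alpha> ^ 2 * (1 - \<alpha> ^ 2)"
    unfolding sq by simp
  finally have c: "c * (1 + 3 * \<alpha> ^ 2) = \<alpha> ^ 2 * (1 - \<alpha> ^ 2)" .
  show "31 * c ^ 3 - 62 * c ^ 2 + 35 * c - 3 = 0"
    using c assms(1) by - algebra
  have "\<alpha> ^ 2 < 1/2"
    using cubic_root_bounds[OF assms(1)] by simp
  then have "0 \<le> c * (1 + 3 * \<alpha> ^ 2)"
    unfolding c by simp
  with \<open>1 + 3 * \<alpha> ^ 2 > 0\<close> show "0 \<le> c"
    by (simp add: zero_le_mult_iff)
  have "c * (1 + 3 * \<alpha> ^ 2) \<le> 12/100 * (1 + 3 * \<alpha> ^ 2)"
    unfolding c using zero_le_power2[of "\<alpha> ^ 2 - 32/100"]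
    by (simp add: power2_eq_square algebra_simps)
  then show "c \<le> 12/100"
    using \<open>1 + 3 * \<alpha> ^ 2 > 0\<close> by (rule mult_right_le_imp_le)
qed

lemma meander_constant_cubic:
  assumes "\<alpha> ^ 3 + \<alpha> = 1"
  defines "c \<equiv> meander_constant \<alpha>"
  shows "31 * c ^ 3 - 31 * c ^ 2 + 16 * c - 3 = 0"
proof -
  have "\<alpha> * (1 + \<alpha> ^ 2) = 1"
    using assms(1) by (simp add: algebra_simps power3_eq_cube power2_eq_square)
  then have "\<alpha> \<noteq> 0" "1 + \<alpha> ^ 2 \<noteq> 0"
    by auto
  moreover have "1 + 3 * \<alpha> ^ 2 > 0"
    by (simp add: add_pos_nonneg)
  ultimately have "c * (\<alpha> ^ 2 * (1 + \<alpha> ^ 2) * (1 + 3 * \<alpha> ^ 2)) = 1 - \<alpha> ^ 2"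
    unfolding c_def meander_constant_def by simp
  then show ?thesis
    using assms(1) by - algebra
qed

text \<open>The cubic has a single real root; the bound on \<open>c\<close> makes the quadratic cofactor positive.\<close>

lemma excursion_cubic_root_unique:
  fixes x c :: real
  assumes "31 * x ^ 3 - 62 * x ^ 2 + 35 * x - 3 = 0" "31 * c ^ 3 - 62 * c ^ 2 + 35 * c - 3 = 0"
    and "0 \<le> c" "c \<le> 12/100"
  shows "x = c"
proof -
  define Q where "Q = 31 * x^2 + (31 * c - 62) * x + 31 * c^2 - 62 * c + 35"
  have "124 * Q = (62 * x + 31 * c - 62)^2 + (2883 * c^2 - 3844 * c + 496)"
    unfolding Q_def by algebra
  moreover have "(62 * x + 31 * c - 62)^2 \<ge> 0" "c^2 \<ge> 0"
    by simp_all
  ultimately have "Q > 0"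
    using assms(3,4) by linarith
  moreover have "(x - c) * Q = 0"
    using assms(1,2) unfolding Q_def by algebra
  ultimately show ?thesis
    by simp
qed

lemma meander_cubic_root_unique:
  fixes x c :: real
  assumes "31 * x ^ 3 - 31 * x ^ 2 + 16 * x - 3 = 0" "31 * c ^ 3 - 31 * c ^ 2 + 16 * c - 3 = 0"
  shows "x = c"
proof -
  define Q where "Q = 31 * (x^2 + x * c + c^2) - 31 * (x + c) + 16"
  have "4 * Q = 93 * (x + c - 2/3)^2 + 31 * (x - c)^2 + 68/3"
    unfolding Q_def by algebra
  moreover have "(x + c - 2/3)^2 \<ge> 0" "(x - c)^2 \<ge> 0"
    by simp_all
  ultimately have "Q > 0"
    by linarith
  moreover have "(x - c) * Q = 0"
    using assms unfolding Q_def by algebra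
  ultimately show ?thesis
    by simp
qed

lemma sqrt_of_root:
  fixes \<rho> :: real
  assumes "\<rho> > 0" "\<rho> ^ 3 + 2 * \<rho> ^ 2 + \<rho> - 1 = 0"
  shows "sqrt \<rho> ^ 3 + sqrt \<rho> = 1"
proof -
  define \<alpha> where "\<alpha> = sqrt \<rho>"
  have "\<alpha> > 0" "\<alpha> ^ 2 = \<rho>"
    using assms(1) by (simp_all add: \<alpha>_def)
  have "(\<alpha> ^ 3 + \<alpha> - 1) * (\<alpha> ^ 3 + \<alpha> + 1) = (\<alpha> ^ 2) ^ 3 + 2 * (\<alpha> ^ 2) ^ 2 + \<alpha> ^ 2 - 1"
    by algebra
  then have "(\<alpha> ^ 3 + \<alpha> - 1) * (\<alpha> ^ 3 + \<alpha> + 1) = 0"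
    using \<open>\<alpha> ^ 2 = \<rho>\<close> assms(2) by simp
  moreover have "\<alpha> ^ 3 + \<alpha> + 1 > 0"
    using \<open>\<alpha> > 0\<close> by (simp add: add_pos_pos)
  ultimately show ?thesis
    by (simp add: \<alpha>_def)
qed

theorem corollary4p7:
  fixes \<rho>0 Ce Cm :: real
  assumes "\<rho>0 > 0" and "\<rho>0 ^ 3 + 2 * \<rho>0 ^ 2 + \<rho>0 - 1 = 0"
    and "Ce > 0" and "31 * Ce ^ 3 - 62 * Ce ^ 2 + 35 * Ce - 3 = 0"
    and "Cm > 0" and "31 * Cm ^ 3 - 31 * Cm ^ 2 + 16 * Cm - 3 = 0"
  shows "(\<lambda>n. real (e_num n) - Ce * (1 / \<rho>0) ^ n) \<in> O(\<lambda>n. (1 / \<rho>0) ^ n / real n) \<and>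
         (\<lambda>n. real (m_num n) - Cm * (1 / \<rho>0) ^ n) \<in> O(\<lambda>n. (1 / \<rho>0) ^ n / real n)"
proof -
  define \<alpha> where "\<alpha> = sqrt \<rho>0"
  have \<rho>0: "\<rho>0 = \<alpha> ^ 2"
    using assms(1) by (simp add: \<alpha>_def)
  have root: "\<alpha> ^ 3 + \<alpha> = 1"
    unfolding \<alpha>_def using assms(1,2) by (rule sqrt_of_root)
  have "Ce = excursion_constant \<alpha>"
    using excursion_cubic_root_unique[OF assms(4)] excursion_constant_cubic[OF root] by blast
  moreover have "Cm = meander_constant \<alpha>"
    using meander_cubic_root_unique[OF assms(6)] meander_constant_cubic[OF root] by blast
  ultimately show ?thesis
    unfolding \<rho>0 using excursions_asymptotic[OF root] meanders_asymptotic[OF root] by simp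
qed

end
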